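(* Let $G$ be a compactly generated, totally disconnected, locally compact group with modular function $\Delta$, and let $\Gamma$ be a Cayley–Abels graph for $G$. Let $\alpha$ be a vertex of $\Gamma$, let $B_1,\dots,B_n$ be the orbits of $G_\alpha$ on the set $\Gamma(\alpha)$ of neighbours of $\alpha$, and for each $i$ choose $g_i\in G$ with $\alpha g_i\in B_i$. Then $$\mathrm{im}(\Delta)=\left\langle \frac{|(\alpha g_1)G_\alpha|}{|(\alpha g_1^{-1})G_\alpha|},\dots,\frac{|(\alpha g_n)G_\alpha|}{|(\alpha g_n^{-1})G_\alpha|}\right\rangle\le \mathbb{Q}^{+}.$$ In particular, $\mathrm{im}(\Delta)$ is a finitely generated free abelian subgroup of the multiplicative group of positive rationals.
   Context: Groups act on the right. A Cayley–Abels graph for a totally disconnected, locally compact group $G$ is a connected, locally finite simple graph with an action of $G$ by automorphisms that is vertex-transitive with compact open vertex stabilizers. The modular function $\Delta\colon G\to\mathbb{R}^{+}$ is defined via a right-invariant Haar measure $\mu$ by $\mu(gA)=\Delta(g)\mu(A)$; equivalently, for any compact open subgroup $U$, $\Delta(g)=|U:U\cap g^{-1}Ug|/|g^{-1}Ug:U\cap g^{-1}Ug|$. *)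

theory Defs
  imports "HOL-Analysis.Analysis" "HOL-Algebra.Coset" "HOL-Algebra.Generated_Groups"
begin

definition totally_disconnected_space :: "'a topology \<Rightarrow> bool" where
  "totally_disconnected_space T \<longleftrightarrow>
     (\<forall>x\<in>topspace T. connected_component_of_set T x = {x})"

definition tdlc_group :: "('a, 'b) monoid_scheme \<Rightarrow> 'a topology \<Rightarrow> bool" where
  "tdlc_group G T \<longleftrightarrow> group G \<and> topspace T = carrier G
     \<and> continuous_map (prod_topology T T) T (\<lambda>(x, y). x \<otimes>\<^bsub>G\<^esub> y)
     \<and> continuous_map T T (\<lambda>x. inv\<^bsub>G\<^esub> x)
     \<and> Hausdorff_space T \<and> locally_compact_space T
     \<and> totally_disconnected_space T"

definition compactly_generated :: "('a, 'b) monoid_scheme \<Rightarrow> 'a topology \<Rightarrow> bool" where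
  "compactly_generated G T \<longleftrightarrow>
     (\<exists>K. K \<subseteq> carrier G \<and> compactin T K \<and> generate G K = carrier G)"

definition compact_open_subgroup :: "('a, 'b) monoid_scheme \<Rightarrow> 'a topology \<Rightarrow> 'a set \<Rightarrow> bool" where
  "compact_open_subgroup G T U \<longleftrightarrow> subgroup U G \<and> compactin T U \<and> openin T U"

definition sg_index :: "('a, 'b) monoid_scheme \<Rightarrow> 'a set \<Rightarrow> 'a set \<Rightarrow> nat" where
  "sg_index G K H = card ((\<lambda>k. H #>\<^bsub>G\<^esub> k) ` K)"

definition conj_sg :: "('a, 'b) monoid_scheme \<Rightarrow> 'a \<Rightarrow> 'a set \<Rightarrow> 'a set" where
  "conj_sg G g U = (inv\<^bsub>G\<^esub> g <#\<^bsub>G\<^esub> U) #>\<^bsub>G\<^esub> g"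

definition modular_function :: "('a, 'b) monoid_scheme \<Rightarrow> 'a topology \<Rightarrow> 'a \<Rightarrow> real" where
  "modular_function G T g =
     (let U = (SOME U. compact_open_subgroup G T U); V = conj_sg G g U in
      real (sg_index G U (U \<inter> V)) / real (sg_index G V (U \<inter> V)))"

(* Cayley-Abels graph: vertex set = the type 'v, simple graph with edge relation E,
   right action act of G (written \<alpha> g = act \<alpha> g). *)
definition vertex_stabilizer :: "('a, 'b) monoid_scheme \<Rightarrow> ('v \<Rightarrow> 'a \<Rightarrow> 'v) \<Rightarrow> 'v \<Rightarrow> 'a set" where
  "vertex_stabilizer G act v = {g \<in> carrier G. act v g = v}"

definition cayley_abels_graph ::
  "('a, 'b) monoid_scheme \<Rightarrow> 'a topology \<Rightarrow> ('v \<Rightarrow> 'v \<Rightarrow> bool) \<Rightarrow> ('v \<Rightarrow> 'a \<Rightarrow> 'v) \<Rightarrow> bool" where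
  "cayley_abels_graph G T E act \<longleftrightarrow>
     (\<forall>x y. E x y \<longrightarrow> E y x) \<and> (\<forall>x. \<not> E x x)
     \<and> (\<forall>x y. E\<^sup>*\<^sup>* x y)
     \<and> (\<forall>x. finite {y. E x y})
     \<and> (\<forall>x. act x \<one>\<^bsub>G\<^esub> = x)
     \<and> (\<forall>x. \<forall>g\<in>carrier G. \<forall>h\<in>carrier G. act (act x g) h = act x (g \<otimes>\<^bsub>G\<^esub> h))
     \<and> (\<forall>x y. \<forall>g\<in>carrier G. E x y \<longleftrightarrow> E (act x g) (act y g))
     \<and> (\<forall>x y. \<exists>g\<in>carrier G. act x g = y)
     \<and> (\<forall>x. compactin T (vertex_stabilizer G act x) \<and> openin T (vertex_stabilizer G act x))"

definition stab_orbit :: "('a, 'b) monoid_scheme \<Rightarrow> ('v \<Rightarrow> 'a \<Rightarrow> 'v) \<Rightarrow> 'v \<Rightarrow> 'v \<Rightarrow> 'v set" where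
  "stab_orbit G act \<alpha> v = (\<lambda>h. act v h) ` vertex_stabilizer G act \<alpha>"

definition pos_real_group :: "real monoid" where
  "pos_real_group = \<lparr>carrier = {x. x > 0}, mult = (*), one = 1\<rparr>"

end

theory Submission
  imports Defs "HOL-Algebra.Group_Action"
begin

text \<open>For a compact open subgroup \<open>W\<close>, the modular function is the index ratio
  \<open>\<Delta>(g) = |W : W \<inter> W\<^sup>g| / |W\<^sup>g : W \<inter> W\<^sup>g|\<close> with \<open>W\<^sup>g = g\<inverse> W g\<close>.
  Index ratios of commensurable subgroups form a conjugation-invariant cocycle, which makes
  this independent of \<open>W\<close> and \<open>\<Delta>\<close> a homomorphism. For \<open>W = G\<^sub>\<alpha>\<close> the conjugate
  \<open>W\<^sup>g\<close> is the stabiliser of \<open>\<alpha>g\<close>, so \<open>\<Delta>(g)\<close> depends only on \<open>\<alpha>g\<close>, and by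
  orbit-stabiliser the two indices are \<open>|(\<alpha>g)G\<^sub>\<alpha>|\<close> and \<open>|(\<alpha>g\<inverse>)G\<^sub>\<alpha>|\<close>.
  If \<open>\<alpha>h'\<close> and \<open>\<alpha>h\<close> are adjacent, then \<open>\<alpha>hh'\<inverse>\<close> is a neighbour of \<open>\<alpha>\<close>, in the
  orbit \<open>B\<^sub>i\<close> say, and \<open>\<Delta>(h) = \<Delta>(g\<^sub>i) \<Delta>(h')\<close>; following a path from \<open>\<alpha>\<close> to
  \<open>\<alpha>g\<close> in the connected graph writes \<open>\<Delta>(g)\<close> as a product of the \<open>\<Delta>(g\<^sub>i)\<close>.\<close>

lemma card_image_eq_if_kernels_eq:
  assumes "\<And>x y. x \<in> S \<Longrightarrow> y \<in> S \<Longrightarrow> f x = f y \<longleftrightarrow> g x = g y"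
  shows "card (f ` S) = card (g ` S)"
proof -
  let ?h = "\<lambda>y. f (inv_into S g y)"
  have h: "?h (g x) = f x" if "x \<in> S" for x
    using assms that inv_into_into[of "g x" g S] f_inv_into_f[of "g x" g S] by blast
  have "inj_on ?h (g ` S)"
    by (rule inj_onI) (use assms inv_into_into f_inv_into_f in metis)
  moreover have "f ` S = ?h ` g ` S"
    using h by (auto simp: image_iff)
  ultimately show ?thesis
    by (simp add: card_image)
qed

section \<open>Indices of subgroups\<close>

context group
begin

lemma m_inv_m_cancel: "x \<in> carrier G \<Longrightarrow> y \<in> carrier G \<Longrightarrow> x \<otimes> (inv x \<otimes> y) = y"
  by (simp flip: m_assoc)

lemma inv_m_m_cancel: "x \<in> carrier G \<Longrightarrow> y \<in> carrier G \<Longrightarrow> inv x \<otimes> (x \<otimes> y) = y"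
  by (simp flip: m_assoc)

lemma rcos_eq_iff:
  assumes "subgroup H G" "x \<in> carrier G" "y \<in> carrier G"
  shows "H #> x = H #> y \<longleftrightarrow> x \<otimes> inv y \<in> H"
  using assms repr_independence repr_independenceD subgroup.rcos_module[OF _ is_group]
  by metis

lemma rcos_eq_supergroup:
  assumes D: "subgroup D G" and C: "subgroup C G" and "D \<subseteq> C"
    and "c \<in> C" "c' \<in> C" "r \<in> carrier G" "r' \<in> carrier G"
    and "D #> c #> r = D #> c' #> r'"
  shows "C #> r = C #> r'"
proof -
  have c: "c \<in> carrier G" "c' \<in> carrier G"
    using subgroup.mem_carrier[OF C] assms(4,5) by simp_all
  have "D #> (c \<otimes> r) = D #> (c' \<otimes> r')"
    using assms(6-8) c subgroup.subset[OF D] by (simp add: coset_mult_assoc)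
  then have "c \<otimes> r \<otimes> inv (c' \<otimes> r') \<in> C"
    using rcos_eq_iff[OF D, of "c \<otimes> r" "c' \<otimes> r'"] c assms(3,6,7) by auto
  then have "C #> (c \<otimes> r) = C #> (c' \<otimes> r')"
    using rcos_eq_iff[OF C, of "c \<otimes> r" "c' \<otimes> r'"] c assms(6,7) by simp
  then show ?thesis
    using coset_join2[OF c(1) C assms(4)] coset_join2[OF c(2) C assms(5)] c assms(6,7)
      subgroup.subset[OF C]
    by (simp flip: coset_mult_assoc)
qed

lemma inj_on_rcos_tower:
  assumes A: "subgroup A G" and C: "subgroup C G" and D: "subgroup D G"
    and "D \<subseteq> C" "C \<subseteq> A"
    and rep: "\<And>Y. Y \<in> (\<lambda>a. C #> a) ` A \<Longrightarrow> rep Y \<in> A \<and> C #> rep Y = Y"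
  shows "inj_on (\<lambda>(Y, Z). Z #> rep Y) ((\<lambda>a. C #> a) ` A \<times> (\<lambda>c. D #> c) ` C)"
proof (rule inj_onI, clarify)
  have carr: "x \<in> carrier G" if "x \<in> A" for x
    using that subgroup.mem_carrier[OF A] by simp
  fix a c a' c'
  assume "a \<in> A" "a' \<in> A" "c \<in> C" "c' \<in> C"
    and eq: "D #> c #> rep (C #> a) = D #> c' #> rep (C #> a')"
  have "rep (C #> a) \<in> A" "rep (C #> a') \<in> A"
    using rep \<open>a \<in> A\<close> \<open>a' \<in> A\<close> by auto
  then have "C #> rep (C #> a) = C #> rep (C #> a')"
    using rcos_eq_supergroup[OF D C \<open>D \<subseteq> C\<close> \<open>c \<in> C\<close> \<open>c' \<in> C\<close> _ _ eq] carr by simp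
  then have Y: "C #> a = C #> a'"
    using rep \<open>a \<in> A\<close> \<open>a' \<in> A\<close> by auto
  define r where "r = rep (C #> a)"
  have r: "r \<in> carrier G"
    using rep carr \<open>a \<in> A\<close> unfolding r_def by auto
  have "D #> c #> r #> inv r = D #> c' #> r #> inv r"
    using eq Y unfolding r_def by simp
  then have "D #> c = D #> c'"
    using r subgroup.subset[OF D] \<open>c \<in> C\<close> \<open>c' \<in> C\<close> \<open>C \<subseteq> A\<close> carr
    by (simp add: coset_mult_assoc m_assoc subset_iff)
  with Y show "C #> a = C #> a' \<and> D #> c = D #> c'"
    by simp
qed

lemma image_rcos_tower:
  assumes A: "subgroup A G" and C: "subgroup C G" and D: "subgroup D G"
    and "C \<subseteq> A"
    and rep: "\<And>Y. Y \<in> (\<lambda>a. C #> a) ` A \<Longrightarrow> rep Y \<in> A \<and> C #> rep Y = Y"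
  shows "(\<lambda>(Y, Z). Z #> rep Y) ` ((\<lambda>a. C #> a) ` A \<times> (\<lambda>c. D #> c) ` C) = (\<lambda>a. D #> a) ` A"
proof (intro equalityI subsetI)
  have carr: "x \<in> carrier G" if "x \<in> A" for x
    using that subgroup.mem_carrier[OF A] by simp
  have Dc: "D \<subseteq> carrier G"
    by (rule subgroup.subset[OF D])
  {
    fix X assume "X \<in> (\<lambda>(Y, Z). Z #> rep Y) ` ((\<lambda>a. C #> a) ` A \<times> (\<lambda>c. D #> c) ` C)"
    then obtain a c where "a \<in> A" "c \<in> C" "X = D #> c #> rep (C #> a)"
      by auto
    then have "c \<otimes> rep (C #> a) \<in> A" "X = D #> (c \<otimes> rep (C #> a))"
      using rep subgroup.m_closed[OF A] \<open>C \<subseteq> A\<close> Dc carr by (auto simp: coset_mult_assoc)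
    then show "X \<in> (\<lambda>a. D #> a) ` A"
      by auto
  next
    fix X assume "X \<in> (\<lambda>a. D #> a) ` A"
    then obtain a where a: "a \<in> A" "X = D #> a"
      by auto
    define r where "r = rep (C #> a)"
    have r: "r \<in> A" "C #> r = C #> a"
      using rep a unfolding r_def by auto
    then have "a \<otimes> inv r \<in> C"
      using rcos_eq_iff[OF C, of a r] carr a by simp
    moreover have "X = D #> (a \<otimes> inv r) #> r"
      using a r carr Dc by (simp add: coset_mult_assoc m_assoc)
    ultimately show "X \<in> (\<lambda>(Y, Z). Z #> rep Y) ` ((\<lambda>a. C #> a) ` A \<times> (\<lambda>c. D #> c) ` C)"
      using a unfolding r_def by (auto simp: image_iff)
  }
qed

text \<open>No finiteness hypothesis is needed: \<open>sg_index\<close> is a cardinality, so an infinite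
  index counts as \<open>0\<close> on both sides.\<close>

lemma sg_index_mult:
  assumes A: "subgroup A G" and C: "subgroup C G" and D: "subgroup D G"
    and "D \<subseteq> C" "C \<subseteq> A"
  shows "sg_index G A D = sg_index G A C * sg_index G C D"
proof -
  let ?rep = "inv_into A (\<lambda>a. C #> a)"
  have "?rep Y \<in> A \<and> C #> ?rep Y = Y" if "Y \<in> (\<lambda>a. C #> a) ` A" for Y
    using inv_into_into[OF that] f_inv_into_f[OF that] by simp
  then have "bij_betw (\<lambda>(Y, Z). Z #> ?rep Y)
              ((\<lambda>a. C #> a) ` A \<times> (\<lambda>c. D #> c) ` C) ((\<lambda>a. D #> a) ` A)"
    using inj_on_rcos_tower[OF assms] image_rcos_tower[OF A C D \<open>C \<subseteq> A\<close>]
    by (simp add: bij_betw_def)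
  from bij_betw_same_card[OF this] show ?thesis
    unfolding sg_index_def by (simp add: card_cartesian_product)
qed

lemma sg_index_Int_le:
  assumes X: "subgroup X G" and H: "subgroup H G" and Z: "subgroup Z G" and "X \<subseteq> Z"
    and "0 < sg_index G Z H"
  shows "0 < sg_index G X (X \<inter> H) \<and> sg_index G X (X \<inter> H) \<le> sg_index G Z H"
proof -
  have XH: "subgroup (X \<inter> H) G"
    by (rule subgroups_Inter_pair[OF X H])
  have "sg_index G X (X \<inter> H) = card ((\<lambda>x. H #> x) ` X)"
    unfolding sg_index_def
  proof (rule card_image_eq_if_kernels_eq)
    fix x y assume "x \<in> X" "y \<in> X"
    then have "x \<otimes> inv y \<in> X" "x \<in> carrier G" "y \<in> carrier G"
      using subgroup.m_closed[OF X] subgroup.m_inv_closed[OF X] subgroup.mem_carrier[OF X] by auto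
    then show "(X \<inter> H) #> x = (X \<inter> H) #> y \<longleftrightarrow> H #> x = H #> y"
      using rcos_eq_iff[OF XH] rcos_eq_iff[OF H] by simp
  qed
  moreover have "(\<lambda>x. H #> x) ` X \<subseteq> (\<lambda>z. H #> z) ` Z"
    using \<open>X \<subseteq> Z\<close> by auto
  moreover have "finite ((\<lambda>z. H #> z) ` Z)"
    using \<open>0 < sg_index G Z H\<close> unfolding sg_index_def by (simp add: card_gt_0_iff)
  moreover have "X \<noteq> {}"
    using subgroup.one_closed[OF X] by auto
  ultimately show ?thesis
    unfolding sg_index_def by (metis card_gt_0_iff card_mono finite_subset image_is_empty)
qed

lemma conj_sg_eq_image:
  "U \<subseteq> carrier G \<Longrightarrow> g \<in> carrier G \<Longrightarrow> conj_sg G g U = (\<lambda>u. inv g \<otimes> u \<otimes> g) ` U"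
  unfolding conj_sg_def l_coset_def r_coset_def by auto

lemma conj_sg_eq_preimage:
  assumes "U \<subseteq> carrier G" "g \<in> carrier G"
  shows "conj_sg G g U = {x \<in> carrier G. g \<otimes> x \<otimes> inv g \<in> U}"
proof (intro equalityI subsetI)
  fix x assume "x \<in> conj_sg G g U"
  then show "x \<in> {x \<in> carrier G. g \<otimes> x \<otimes> inv g \<in> U}"
    using assms by (auto simp: conj_sg_eq_image m_assoc m_inv_m_cancel)
next
  fix x assume "x \<in> {x \<in> carrier G. g \<otimes> x \<otimes> inv g \<in> U}"
  then have "x = inv g \<otimes> (g \<otimes> x \<otimes> inv g) \<otimes> g" "g \<otimes> x \<otimes> inv g \<in> U"
    using assms by (auto simp: m_assoc inv_m_m_cancel)
  then show "x \<in> conj_sg G g U"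
    using assms by (auto simp: conj_sg_eq_image)
qed

lemma subgroup_conj_sg: "subgroup H G \<Longrightarrow> g \<in> carrier G \<Longrightarrow> subgroup (conj_sg G g H) G"
  unfolding conj_sg_def by (rule subgroup_conjugation_is_surj1)

lemma conj_sg_subset_carrier: "U \<subseteq> carrier G \<Longrightarrow> g \<in> carrier G \<Longrightarrow> conj_sg G g U \<subseteq> carrier G"
  by (auto simp: conj_sg_eq_image)

lemma conj_sg_Int:
  assumes "A \<subseteq> carrier G" "B \<subseteq> carrier G" "g \<in> carrier G"
  shows "conj_sg G g (A \<inter> B) = conj_sg G g A \<inter> conj_sg G g B"
proof -
  have "inj_on (\<lambda>u. inv g \<otimes> u \<otimes> g) (carrier G)"
    using assms(3) by (intro inj_onI) simp
  then show ?thesis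
    using assms by (simp add: conj_sg_eq_image inj_on_image_Int le_infI1)
qed

lemma conj_sg_mult:
  assumes U: "U \<subseteq> carrier G" and g: "g \<in> carrier G" and h: "h \<in> carrier G"
  shows "conj_sg G (g \<otimes> h) U = conj_sg G h (conj_sg G g U)"
proof -
  have "conj_sg G h (conj_sg G g U) = (\<lambda>u. inv h \<otimes> (inv g \<otimes> u \<otimes> g) \<otimes> h) ` U"
    using conj_sg_eq_image[OF conj_sg_subset_carrier[OF U g] h] conj_sg_eq_image[OF U g]
    by (simp add: image_image)
  also have "\<dots> = (\<lambda>u. inv (g \<otimes> h) \<otimes> u \<otimes> (g \<otimes> h)) ` U"
    using U g h by (intro image_cong) (auto simp: inv_mult_group m_assoc)
  finally show ?thesis
    using conj_sg_eq_image[OF U] g h by simp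
qed

lemma sg_index_conj_sg:
  assumes H: "subgroup H G" and K: "K \<subseteq> carrier G" and g: "g \<in> carrier G"
  shows "sg_index G (conj_sg G g K) (conj_sg G g H) = sg_index G K H"
proof -
  let ?c = "\<lambda>u. inv g \<otimes> u \<otimes> g"
  have "sg_index G (conj_sg G g K) (conj_sg G g H) = card ((\<lambda>k. conj_sg G g H #> ?c k) ` K)"
    unfolding sg_index_def conj_sg_eq_image[OF K g] image_image ..
  also have "\<dots> = card ((\<lambda>k. H #> k) ` K)"
  proof (rule card_image_eq_if_kernels_eq)
    fix x y assume "x \<in> K" "y \<in> K"
    then have xy: "x \<in> carrier G" "y \<in> carrier G"
      using K by auto
    have "conj_sg G g H #> ?c x = conj_sg G g H #> ?c y \<longleftrightarrow> ?c x \<otimes> inv (?c y) \<in> conj_sg G g H"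
      using rcos_eq_iff[OF subgroup_conj_sg[OF H g]] xy g by simp
    also have "?c x \<otimes> inv (?c y) = ?c (x \<otimes> inv y)"
      using xy g by (simp add: m_assoc inv_mult_group m_inv_m_cancel)
    also have "?c (x \<otimes> inv y) \<in> conj_sg G g H \<longleftrightarrow> x \<otimes> inv y \<in> H"
      using xy g subgroup.subset[OF H] by (auto simp: conj_sg_eq_image)
    also have "\<dots> \<longleftrightarrow> H #> x = H #> y"
      using rcos_eq_iff[OF H xy] by simp
    finally show "conj_sg G g H #> ?c x = conj_sg G g H #> ?c y \<longleftrightarrow> H #> x = H #> y" .
  qed
  finally show ?thesis
    unfolding sg_index_def .
qed

section \<open>Commensurable subgroups\<close>

text \<open>Positivity of \<open>sg_index\<close> expresses that the index is finite.\<close>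

definition commensurable :: "'a set \<Rightarrow> 'a set \<Rightarrow> bool" where
  "commensurable A B \<longleftrightarrow> 0 < sg_index G A (A \<inter> B) \<and> 0 < sg_index G B (A \<inter> B)"

definition index_ratio :: "'a set \<Rightarrow> 'a set \<Rightarrow> real" where
  "index_ratio A B = real (sg_index G A (A \<inter> B)) / real (sg_index G B (A \<inter> B))"

lemma index_ratio_eq_via_subgroup:
  assumes A: "subgroup A G" and B: "subgroup B G" and D: "subgroup D G"
    and "D \<subseteq> A \<inter> B" and "0 < sg_index G (A \<inter> B) D"
  shows "index_ratio A B = real (sg_index G A D) / real (sg_index G B D)"
proof -
  have AB: "subgroup (A \<inter> B) G"
    by (rule subgroups_Inter_pair[OF A B])
  have "sg_index G A D = sg_index G A (A \<inter> B) * sg_index G (A \<inter> B) D"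
    by (rule sg_index_mult[OF A AB D]) (use \<open>D \<subseteq> A \<inter> B\<close> in auto)
  moreover have "sg_index G B D = sg_index G B (A \<inter> B) * sg_index G (A \<inter> B) D"
    by (rule sg_index_mult[OF B AB D]) (use \<open>D \<subseteq> A \<inter> B\<close> in auto)
  ultimately show ?thesis
    unfolding index_ratio_def using \<open>0 < sg_index G (A \<inter> B) D\<close> by simp
qed

text \<open>All three ratios are computed through \<open>D = A \<inter> B \<inter> C\<close>, which has finite index
  in \<open>A \<inter> B\<close>, \<open>B \<inter> C\<close> and hence everywhere.\<close>

lemma index_ratio_mult:
  assumes A: "subgroup A G" and B: "subgroup B G" and C: "subgroup C G"
    and "commensurable A B" and "commensurable B C"
  shows "index_ratio A B * index_ratio B C = index_ratio A C"
proof -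
  define D where "D = A \<inter> B \<inter> C"
  have AB: "subgroup (A \<inter> B) G" and BC: "subgroup (B \<inter> C) G" and AC: "subgroup (A \<inter> C) G"
    using subgroups_Inter_pair A B C by simp_all
  have D: "subgroup D G"
    unfolding D_def by (rule subgroups_Inter_pair[OF AB C])
  have "A \<inter> B \<inter> (B \<inter> C) = D" "B \<inter> C \<inter> (A \<inter> B) = D"
    unfolding D_def by blast+
  then have AB_D: "0 < sg_index G (A \<inter> B) D" and BC_D: "0 < sg_index G (B \<inter> C) D"
    using sg_index_Int_le[OF AB BC B] sg_index_Int_le[OF BC AB B]
      \<open>commensurable A B\<close> \<open>commensurable B C\<close>
    unfolding commensurable_def by (simp_all add: Int_commute)
  have "sg_index G A D = sg_index G A (A \<inter> B) * sg_index G (A \<inter> B) D"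
    by (rule sg_index_mult[OF A AB D]) (auto simp: D_def)
  moreover have "sg_index G A D = sg_index G A (A \<inter> C) * sg_index G (A \<inter> C) D"
    by (rule sg_index_mult[OF A AC D]) (auto simp: D_def)
  ultimately have AC_D: "0 < sg_index G (A \<inter> C) D"
    using AB_D \<open>commensurable A B\<close> unfolding commensurable_def by (metis nat_0_less_mult_iff)
  have "sg_index G B D = sg_index G B (A \<inter> B) * sg_index G (A \<inter> B) D"
    by (rule sg_index_mult[OF B AB D]) (auto simp: D_def)
  then have "0 < sg_index G B D"
    using AB_D \<open>commensurable A B\<close> unfolding commensurable_def by simp
  moreover have "index_ratio A B = real (sg_index G A D) / real (sg_index G B D)"
    by (rule index_ratio_eq_via_subgroup[OF A B D _ AB_D]) (auto simp: D_def)
  moreover have "index_ratio B C = real (sg_index G B D) / real (sg_index G C D)"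
    by (rule index_ratio_eq_via_subgroup[OF B C D _ BC_D]) (auto simp: D_def)
  moreover have "index_ratio A C = real (sg_index G A D) / real (sg_index G C D)"
    by (rule index_ratio_eq_via_subgroup[OF A C D _ AC_D]) (auto simp: D_def)
  ultimately show ?thesis
    by simp
qed

lemma index_ratio_swap:
  "commensurable A B \<Longrightarrow> index_ratio A B * index_ratio B A = 1"
  unfolding commensurable_def index_ratio_def by (simp add: Int_commute)

lemma index_ratio_conj_sg:
  assumes A: "subgroup A G" and B: "subgroup B G" and g: "g \<in> carrier G"
  shows "index_ratio (conj_sg G g A) (conj_sg G g B) = index_ratio A B"
proof -
  have AB: "subgroup (A \<inter> B) G"
    by (rule subgroups_Inter_pair[OF A B])
  have "conj_sg G g A \<inter> conj_sg G g B = conj_sg G g (A \<inter> B)"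
    using conj_sg_Int subgroup.subset[OF A] subgroup.subset[OF B] g by simp
  then show ?thesis
    unfolding index_ratio_def
    using sg_index_conj_sg[OF AB subgroup.subset[OF A] g] sg_index_conj_sg[OF AB subgroup.subset[OF B] g]
    by simp
qed

section \<open>Compact open subgroups and the modular function\<close>

lemma tdlc_topspace: "tdlc_group G T \<Longrightarrow> topspace T = carrier G"
  unfolding tdlc_group_def by blast

lemma compact_open_subgroupD: "compact_open_subgroup G T U \<Longrightarrow> subgroup U G"
  unfolding compact_open_subgroup_def by blast

lemma continuous_map_mult:
  assumes "tdlc_group G T" "continuous_map T T f" "continuous_map T T f'"
  shows "continuous_map T T (\<lambda>x. f x \<otimes> f' x)"
proof -
  have "continuous_map (prod_topology T T) T (\<lambda>(x, y). x \<otimes> y)"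
    using assms(1) unfolding tdlc_group_def by blast
  from continuous_map_compose[OF continuous_map_pairedI[OF assms(2,3)] this] show ?thesis
    by (simp add: o_def)
qed

lemma continuous_map_conj:
  assumes T: "tdlc_group G T" and "a \<in> carrier G" "b \<in> carrier G"
  shows "continuous_map T T (\<lambda>x. a \<otimes> x \<otimes> b)"
  using assms continuous_map_id[unfolded id_def] tdlc_topspace[OF T]
  by (intro continuous_map_mult[OF T]) simp_all

lemma openin_rcos:
  assumes T: "tdlc_group G T" and V: "subgroup V G" "openin T V" and k: "k \<in> carrier G"
  shows "openin T (V #> k)"
proof -
  have cont: "continuous_map T T (\<lambda>x. x \<otimes> inv k)"
    using continuous_map_mult[OF T continuous_map_id[unfolded id_def], of "\<lambda>x. inv k"]
      tdlc_topspace[OF T] k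
    by simp
  have "V #> k = {x \<in> topspace T. x \<otimes> inv k \<in> V}"
    using subgroup.rcos_module[OF V(1) is_group k] r_coset_subset_G[OF subgroup.subset[OF V(1)] k]
      tdlc_topspace[OF T]
    by auto
  then show ?thesis
    using openin_continuous_map_preimage[OF cont V(2)] by simp
qed

lemma openin_conj_sg:
  assumes T: "tdlc_group G T" and U: "openin T U" and g: "g \<in> carrier G"
  shows "openin T (conj_sg G g U)"
proof -
  have "conj_sg G g U = {x \<in> topspace T. g \<otimes> x \<otimes> inv g \<in> U}"
    using conj_sg_eq_preimage openin_subset[OF U] g tdlc_topspace[OF T] by simp
  then show ?thesis
    using openin_continuous_map_preimage[OF continuous_map_conj[OF T g inv_closed[OF g]] U] by simp
qed

lemma compactin_conj_sg:
  assumes T: "tdlc_group G T" and U: "compactin T U" and g: "g \<in> carrier G"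
  shows "compactin T (conj_sg G g U)"
  using image_compactin[OF U continuous_map_conj[OF T inv_closed[OF g] g]]
    conj_sg_eq_image compactin_subset_topspace[OF U] tdlc_topspace[OF T] g
  by simp

lemma compact_open_subgroup_conj_sg:
  "tdlc_group G T \<Longrightarrow> compact_open_subgroup G T U \<Longrightarrow> g \<in> carrier G
    \<Longrightarrow> compact_open_subgroup G T (conj_sg G g U)"
  unfolding compact_open_subgroup_def
  using subgroup_conj_sg openin_conj_sg compactin_conj_sg by blast

lemma sg_index_compact_open_pos:
  assumes T: "tdlc_group G T" and K: "subgroup K G" "compactin T K"
    and V: "subgroup V G" "openin T V"
  shows "0 < sg_index G K (K \<inter> V)"
proof -
  have Kc: "K \<subseteq> carrier G"
    by (rule subgroup.subset[OF K(1)])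
  have "\<forall>X \<in> (\<lambda>k. V #> k) ` K. openin T X" and "K \<subseteq> \<Union> ((\<lambda>k. V #> k) ` K)"
    using openin_rcos[OF T V] rcos_self[OF _ V(1)] Kc by auto
  then obtain \<F> where \<F>: "finite \<F>" "\<F> \<subseteq> (\<lambda>k. V #> k) ` K" "K \<subseteq> \<Union> \<F>"
    using K(2) unfolding compactin_def by blast
  then obtain F where F: "finite F" "F \<subseteq> K" "K \<subseteq> (\<Union>k\<in>F. V #> k)"
    using finite_subset_image[OF \<F>(1,2)] by blast
  have "(\<lambda>k. (K \<inter> V) #> k) ` K \<subseteq> (\<lambda>k. (K \<inter> V) #> k) ` F"
  proof
    fix X assume "X \<in> (\<lambda>k. (K \<inter> V) #> k) ` K"
    then obtain x where x: "x \<in> K" "X = (K \<inter> V) #> x"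
      by auto
    then obtain k where k: "k \<in> F" "x \<in> V #> k"
      using F(3) by auto
    have xk: "x \<in> carrier G" "k \<in> carrier G"
      using x k F(2) Kc by auto
    have "x \<otimes> inv k \<in> V"
      using subgroup.rcos_module[OF V(1) is_group xk(2,1)] k by simp
    moreover have "x \<otimes> inv k \<in> K"
      using subgroup.m_closed[OF K(1)] subgroup.m_inv_closed[OF K(1)] x k F(2) by auto
    ultimately have "X = (K \<inter> V) #> k"
      using rcos_eq_iff[OF subgroups_Inter_pair[OF K(1) V(1)] xk] x by simp
    then show "X \<in> (\<lambda>k. (K \<inter> V) #> k) ` F"
      using k by auto
  qed
  then have "finite ((\<lambda>k. (K \<inter> V) #> k) ` K)"
    using F(1) finite_subset by blast
  moreover have "K \<noteq> {}"
    using subgroup.one_closed[OF K(1)] by auto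
  ultimately show ?thesis
    unfolding sg_index_def by (simp add: card_gt_0_iff)
qed

lemma commensurable_compact_open:
  "tdlc_group G T \<Longrightarrow> compact_open_subgroup G T A \<Longrightarrow> compact_open_subgroup G T B
    \<Longrightarrow> commensurable A B"
  unfolding commensurable_def compact_open_subgroup_def
  using sg_index_compact_open_pos[of T A B] sg_index_compact_open_pos[of T B A]
  by (simp add: Int_commute)

lemma modular_function_eq_index_ratio:
  assumes T: "tdlc_group G T" and W: "compact_open_subgroup G T W" and g: "g \<in> carrier G"
  shows "modular_function G T g = index_ratio W (conj_sg G g W)"
proof -
  define U where "U = (SOME U. compact_open_subgroup G T U)"
  have U: "compact_open_subgroup G T U"
    unfolding U_def using W by (rule someI)
  let ?U' = "conj_sg G g U" and ?W' = "conj_sg G g W"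
  have U': "compact_open_subgroup G T ?U'" and W': "compact_open_subgroup G T ?W'"
    using compact_open_subgroup_conj_sg[OF T] U W g by simp_all
  note sg = compact_open_subgroupD and comm = commensurable_compact_open[OF T]
  have "modular_function G T g = index_ratio U ?U'"
    unfolding modular_function_def index_ratio_def Let_def U_def ..
  also have "\<dots> = index_ratio U W * index_ratio W ?U'"
    using index_ratio_mult[OF sg[OF U] sg[OF W] sg[OF U'] comm[OF U W] comm[OF W U']] by simp
  also have "\<dots> = index_ratio U W * (index_ratio W ?W' * index_ratio ?W' ?U')"
    using index_ratio_mult[OF sg[OF W] sg[OF W'] sg[OF U'] comm[OF W W'] comm[OF W' U']] by simp
  also have "\<dots> = index_ratio W ?W' * (index_ratio U W * index_ratio W U)"
    using index_ratio_conj_sg[OF sg[OF W] sg[OF U] g] by simp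
  also have "\<dots> = index_ratio W ?W'"
    using index_ratio_swap[OF comm[OF U W]] by simp
  finally show ?thesis .
qed

lemma modular_function_mult:
  assumes T: "tdlc_group G T" and W: "compact_open_subgroup G T W"
    and g: "g \<in> carrier G" and h: "h \<in> carrier G"
  shows "modular_function G T (g \<otimes> h) = modular_function G T g * modular_function G T h"
proof -
  let ?Wg = "conj_sg G g W" and ?Wh = "conj_sg G h W"
  have Wg: "compact_open_subgroup G T ?Wg" and Wh: "compact_open_subgroup G T ?Wh"
    and Wgh: "compact_open_subgroup G T (conj_sg G h ?Wg)"
    using compact_open_subgroup_conj_sg[OF T] W g h by simp_all
  note sg = compact_open_subgroupD and comm = commensurable_compact_open[OF T]
  have "modular_function G T (g \<otimes> h) = index_ratio W (conj_sg G h ?Wg)"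
    using modular_function_eq_index_ratio[OF T W] conj_sg_mult[OF subgroup.subset[OF sg[OF W]] g h] g h
    by simp
  also have "\<dots> = index_ratio W ?Wh * index_ratio ?Wh (conj_sg G h ?Wg)"
    using index_ratio_mult[OF sg[OF W] sg[OF Wh] sg[OF Wgh] comm[OF W Wh] comm[OF Wh Wgh]] by simp
  also have "\<dots> = index_ratio W ?Wh * index_ratio W ?Wg"
    using index_ratio_conj_sg[OF sg[OF W] sg[OF Wg] h] by simp
  finally show ?thesis
    using modular_function_eq_index_ratio[OF T W] g h by simp
qed

lemma modular_function_pos:
  assumes T: "tdlc_group G T" and W: "compact_open_subgroup G T W" and g: "g \<in> carrier G"
  shows "0 < modular_function G T g"
  using commensurable_compact_open[OF T W compact_open_subgroup_conj_sg[OF T W g]]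
  unfolding modular_function_eq_index_ratio[OF T W g] commensurable_def index_ratio_def
  by simp

end

lemma modular_function_Rats: "modular_function G T g \<in> \<rat>"
  unfolding modular_function_def Let_def by (simp add: Rats_divide)

lemma group_pos_real_group: "group pos_real_group"
proof (rule groupI)
  fix x assume "x \<in> carrier pos_real_group"
  then show "\<exists>y \<in> carrier pos_real_group. y \<otimes>\<^bsub>pos_real_group\<^esub> x = \<one>\<^bsub>pos_real_group\<^esub>"
    unfolding pos_real_group_def by (intro bexI[of _ "1 / x"]) auto
qed (auto simp: pos_real_group_def)

lemma (in group) group_hom_modular_function:
  assumes "tdlc_group G T" and "compact_open_subgroup G T W"
  shows "group_hom G pos_real_group (modular_function G T)"
proof -
  have "modular_function G T \<in> hom G pos_real_group"
    using modular_function_pos[OF assms] modular_function_mult[OF assms]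
    unfolding hom_def pos_real_group_def by auto
  then show ?thesis
    using group_pos_real_group by (simp add: group_hom_def group_hom_axioms_def is_group)
qed

section \<open>Right actions and Cayley--Abels graphs\<close>

locale right_action = group G for G :: "('a, 'b) monoid_scheme" (structure) +
  fixes act :: "'v \<Rightarrow> 'a \<Rightarrow> 'v"
  assumes act_one: "act x \<one> = x"
    and act_mult: "g \<in> carrier G \<Longrightarrow> h \<in> carrier G \<Longrightarrow> act (act x g) h = act x (g \<otimes> h)"
begin

lemma act_eq_iff:
  assumes "x \<in> carrier G" "y \<in> carrier G"
  shows "act v x = act v y \<longleftrightarrow> x \<otimes> inv y \<in> vertex_stabilizer G act v"
proof
  assume "act v x = act v y"
  then have "act v (x \<otimes> inv y) = act (act v y) (inv y)"
    using assms act_mult[of x "inv y" v] by simp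
  also have "\<dots> = v"
    using assms act_mult[of y "inv y" v] act_one by simp
  finally show "x \<otimes> inv y \<in> vertex_stabilizer G act v"
    using assms unfolding vertex_stabilizer_def by simp
next
  assume "x \<otimes> inv y \<in> vertex_stabilizer G act v"
  then have "act (act v (x \<otimes> inv y)) y = act v y"
    unfolding vertex_stabilizer_def by simp
  then show "act v x = act v y"
    using assms by (simp add: act_mult m_assoc)
qed

lemma subgroup_vertex_stabilizer: "subgroup (vertex_stabilizer G act v) G"
proof (rule subgroupI)
  fix a b assume "a \<in> vertex_stabilizer G act v" "b \<in> vertex_stabilizer G act v"
  then show "a \<otimes> b \<in> vertex_stabilizer G act v"
    unfolding vertex_stabilizer_def by (simp flip: act_mult)
next
  fix a assume "a \<in> vertex_stabilizer G act v"
  then show "inv a \<in> vertex_stabilizer G act v"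
    using act_eq_iff[of \<one> a v] act_one unfolding vertex_stabilizer_def by simp
qed (auto simp: vertex_stabilizer_def act_one)

lemma vertex_stabilizer_act:
  assumes "g \<in> carrier G"
  shows "vertex_stabilizer G act (act v g) = conj_sg G g (vertex_stabilizer G act v)"
proof -
  have "act (act v g) x = act v g \<longleftrightarrow> g \<otimes> x \<otimes> inv g \<in> vertex_stabilizer G act v"
    if "x \<in> carrier G" for x
    using act_eq_iff[of "g \<otimes> x" g v] that assms by (simp add: act_mult)
  then show ?thesis
    using conj_sg_eq_preimage[OF subgroup.subset[OF subgroup_vertex_stabilizer] assms]
    unfolding vertex_stabilizer_def by auto
qed

lemma card_stab_orbit:
  "card (stab_orbit G act u v)
    = sg_index G (vertex_stabilizer G act u) (vertex_stabilizer G act u \<inter> vertex_stabilizer G act v)"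
  unfolding stab_orbit_def sg_index_def
proof (rule card_image_eq_if_kernels_eq)
  let ?S = "vertex_stabilizer G act"
  fix x y assume "x \<in> ?S u" "y \<in> ?S u"
  then have "x \<otimes> inv y \<in> ?S u" "x \<in> carrier G" "y \<in> carrier G"
    using subgroup_vertex_stabilizer subgroup.m_closed subgroup.m_inv_closed subgroup.mem_carrier
    by metis+
  then show "act v x = act v y \<longleftrightarrow> (?S u \<inter> ?S v) #> x = (?S u \<inter> ?S v) #> y"
    using act_eq_iff
      rcos_eq_iff[OF subgroups_Inter_pair[OF subgroup_vertex_stabilizer subgroup_vertex_stabilizer]]
    by simp
qed

end

locale cayley_abels = group G for G :: "('a, 'b) monoid_scheme" (structure) +
  fixes T :: "'a topology" and E :: "'v \<Rightarrow> 'v \<Rightarrow> bool" and act :: "'v \<Rightarrow> 'a \<Rightarrow> 'v"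
  assumes tdlc: "tdlc_group G T"
    and graph: "cayley_abels_graph G T E act"

sublocale cayley_abels \<subseteq> right_action G act
  using graph unfolding cayley_abels_graph_def by unfold_locales blast+

context cayley_abels
begin

abbreviation \<Delta> :: "'a \<Rightarrow> real" where
  "\<Delta> \<equiv> modular_function G T"

lemma compact_open_vertex_stabilizer: "compact_open_subgroup G T (vertex_stabilizer G act v)"
  using graph subgroup_vertex_stabilizer
  unfolding cayley_abels_graph_def compact_open_subgroup_def by blast

sublocale modular: group_hom G pos_real_group \<Delta>
  by (rule group_hom_modular_function[OF tdlc compact_open_vertex_stabilizer])

lemma modular_function_eq_stabilizer_ratio:
  "g \<in> carrier G \<Longrightarrow>
    \<Delta> g = index_ratio (vertex_stabilizer G act v) (vertex_stabilizer G act (act v g))"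
  using modular_function_eq_index_ratio[OF tdlc compact_open_vertex_stabilizer]
  by (simp add: vertex_stabilizer_act)

text \<open>The stabiliser of \<open>\<alpha> g\<inverse>\<close> is carried to that of \<open>\<alpha>\<close> by conjugation with \<open>g\<close>, which
  turns the orbit of \<open>\<alpha> g\<inverse>\<close> into the denominator of the index ratio.\<close>

lemma modular_function_eq_orbit_ratio:
  assumes g: "g \<in> carrier G"
  shows "\<Delta> g = real (card (stab_orbit G act v (act v g)))
                / real (card (stab_orbit G act v (act v (inv g))))"
proof -
  let ?S = "vertex_stabilizer G act"
  let ?W = "?S v" and ?Wg = "?S (act v g)" and ?Wi = "?S (act v (inv g))"
  have Sc: "?S x \<subseteq> carrier G" for x
    using subgroup.subset[OF subgroup_vertex_stabilizer] .
  have "conj_sg G g ?Wi = ?W"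
    using vertex_stabilizer_act[OF g, of "act v (inv g)"] g by (simp add: act_mult act_one)
  then have conj_Int: "conj_sg G g (?W \<inter> ?Wi) = ?W \<inter> ?Wg"
    using conj_sg_Int[OF Sc Sc g] vertex_stabilizer_act[OF g, of v] by blast
  have "card (stab_orbit G act v (act v (inv g))) = sg_index G ?W (?W \<inter> ?Wi)"
    by (rule card_stab_orbit)
  also have "\<dots> = sg_index G (conj_sg G g ?W) (conj_sg G g (?W \<inter> ?Wi))"
    by (rule sg_index_conj_sg[OF subgroups_Inter_pair[OF subgroup_vertex_stabilizer
          subgroup_vertex_stabilizer] Sc g, symmetric])
  also have "\<dots> = sg_index G ?Wg (?W \<inter> ?Wg)"
    unfolding conj_Int vertex_stabilizer_act[OF g, symmetric] ..
  finally have "card (stab_orbit G act v (act v (inv g))) = sg_index G ?Wg (?W \<inter> ?Wg)" .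
  moreover have "card (stab_orbit G act v (act v g)) = sg_index G ?W (?W \<inter> ?Wg)"
    by (rule card_stab_orbit)
  ultimately show ?thesis
    unfolding modular_function_eq_stabilizer_ratio[OF g, of v] index_ratio_def by simp
qed

lemma modular_function_eq_if_act_eq:
  "g \<in> carrier G \<Longrightarrow> h \<in> carrier G \<Longrightarrow> act v g = act v h \<Longrightarrow> \<Delta> g = \<Delta> h"
  using modular_function_eq_stabilizer_ratio[of g v] modular_function_eq_stabilizer_ratio[of h v]
  by simp

lemma modular_function_eq_on_stab_orbit:
  assumes g: "g \<in> carrier G" and d: "d \<in> carrier G"
    and "act v g \<in> stab_orbit G act v (act v d)"
  shows "\<Delta> g = \<Delta> d"
proof -
  obtain k where k: "k \<in> vertex_stabilizer G act v" "act v g = act (act v d) k"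
    using assms(3) unfolding stab_orbit_def by auto
  then have kc: "k \<in> carrier G" and "act v k = act v \<one>"
    unfolding vertex_stabilizer_def by (simp_all add: act_one)
  then have "\<Delta> k = 1"
    using modular_function_eq_if_act_eq[of k \<one>] modular.hom_one by (simp add: pos_real_group_def)
  moreover have "\<Delta> g = \<Delta> (d \<otimes> k)"
    using modular_function_eq_if_act_eq[of g "d \<otimes> k" v] g d kc k(2) by (simp add: act_mult)
  ultimately show ?thesis
    using modular.hom_mult[OF d kc] by (simp add: pos_real_group_def)
qed

lemma edge_translate_to_base:
  assumes "h \<in> carrier G" "h' \<in> carrier G" "E (act v h') (act v h)"
  shows "E v (act v (h \<otimes> inv h'))"
proof -
  have "E (act (act v h') (inv h')) (act (act v h) (inv h'))"
    using graph assms unfolding cayley_abels_graph_def by blast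
  then show ?thesis
    using assms by (simp add: act_mult act_one)
qed

context
  fixes \<alpha> :: 'v and g :: "'v set \<Rightarrow> 'a"
  assumes g: "\<And>B. B \<in> {stab_orbit G act \<alpha> v | v. E \<alpha> v} \<Longrightarrow> g B \<in> carrier G \<and> act \<alpha> (g B) \<in> B"
begin

lemma modular_function_edge_factor:
  assumes h: "h \<in> carrier G" "h' \<in> carrier G" "E (act \<alpha> h') (act \<alpha> h)"
  obtains B where "B \<in> {stab_orbit G act \<alpha> v | v. E \<alpha> v}" "\<Delta> h = \<Delta> (g B) * \<Delta> h'"
proof
  define d where "d = h \<otimes> inv h'"
  have d: "d \<in> carrier G"
    using h unfolding d_def by simp
  show B: "stab_orbit G act \<alpha> (act \<alpha> d) \<in> {stab_orbit G act \<alpha> v | v. E \<alpha> v}"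
    using edge_translate_to_base[OF h] unfolding d_def by blast
  have "\<Delta> (g (stab_orbit G act \<alpha> (act \<alpha> d))) = \<Delta> d"
    using modular_function_eq_on_stab_orbit[OF _ d] g[OF B] by blast
  moreover have "\<Delta> h = \<Delta> d * \<Delta> h'"
    using modular.hom_mult[OF d h(2)] h unfolding d_def by (simp add: m_assoc pos_real_group_def)
  ultimately show "\<Delta> h = \<Delta> (g (stab_orbit G act \<alpha> (act \<alpha> d))) * \<Delta> h'"
    by simp
qed

lemma modular_function_image_eq_generate:
  "\<Delta> ` carrier G = generate pos_real_group ((\<lambda>B. \<Delta> (g B)) ` {stab_orbit G act \<alpha> v | v. E \<alpha> v})"
    (is "_ = ?H")
proof
  have gens: "(\<lambda>B. \<Delta> (g B)) ` {stab_orbit G act \<alpha> v | v. E \<alpha> v} \<subseteq> \<Delta> ` carrier G"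
    using g by blast
  then show "?H \<subseteq> \<Delta> ` carrier G"
    by (rule group.generate_subgroup_incl[OF group_pos_real_group _ modular.img_is_subgroup])
  have "\<Delta> ` carrier G \<subseteq> carrier pos_real_group"
    using modular.hom_closed by auto
  then have H: "subgroup ?H pos_real_group"
    using gens by (intro group.generate_is_subgroup[OF group_pos_real_group]) blast
  have "\<Delta> h \<in> ?H" if "E\<^sup>*\<^sup>* \<alpha> w" "h \<in> carrier G" "act \<alpha> h = w" for w h
    using that
  proof (induction arbitrary: h rule: rtranclp_induct)
    case base
    then have "\<Delta> h = \<Delta> \<one>"
      using modular_function_eq_if_act_eq[of h \<one> \<alpha>] act_one by simp
    then show ?case
      using modular.hom_one subgroup.one_closed[OF H] by (simp add: pos_real_group_def)
  next
    case (step u w)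
    obtain h' where h': "h' \<in> carrier G" "act \<alpha> h' = u"
      using graph unfolding cayley_abels_graph_def by blast
    obtain B where "B \<in> {stab_orbit G act \<alpha> v | v. E \<alpha> v}" "\<Delta> h = \<Delta> (g B) * \<Delta> h'"
      using modular_function_edge_factor[OF step.prems(1) h'(1)] step.hyps(2) step.prems(2) h'(2)
      by blast
    moreover have "\<Delta> (g B) \<in> ?H"
      using \<open>B \<in> _\<close> by (intro generate.incl imageI)
    ultimately show ?case
      using subgroup.m_closed[OF H _ step.IH[OF h']] by (simp add: pos_real_group_def)
  qed
  moreover have "E\<^sup>*\<^sup>* \<alpha> (act \<alpha> h)" for h
    using graph unfolding cayley_abels_graph_def by blast
  ultimately show "\<Delta> ` carrier G \<subseteq> ?H"
    by blast
qed

end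

end

theorem corollary4p3:
  fixes G :: "('a, 'b) monoid_scheme" and T :: "'a topology"
    and E :: "'v \<Rightarrow> 'v \<Rightarrow> bool" and act :: "'v \<Rightarrow> 'a \<Rightarrow> 'v"
    and \<alpha> :: 'v and g :: "'v set \<Rightarrow> 'a"
  assumes "tdlc_group G T"
    and "compactly_generated G T"
    and "cayley_abels_graph G T E act"
    and "\<forall>B \<in> {stab_orbit G act \<alpha> v | v. E \<alpha> v}. g B \<in> carrier G \<and> act \<alpha> (g B) \<in> B"
  shows "modular_function G T ` carrier G =
           generate pos_real_group
             ((\<lambda>B. real (card (stab_orbit G act \<alpha> (act \<alpha> (g B))))
                   / real (card (stab_orbit G act \<alpha> (act \<alpha> (inv\<^bsub>G\<^esub> (g B))))))
              ` {stab_orbit G act \<alpha> v | v. E \<alpha> v})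
         \<and> modular_function G T ` carrier G \<subseteq> \<rat> \<inter> {x. x > 0}"
proof -
  have "group G"
    using assms(1) unfolding tdlc_group_def by blast
  then interpret cayley_abels G T E act
    using assms(1,3) by (simp add: cayley_abels_def cayley_abels_axioms_def)
  have generators:
    "(\<lambda>B. real (card (stab_orbit G act \<alpha> (act \<alpha> (g B))))
              / real (card (stab_orbit G act \<alpha> (act \<alpha> (inv\<^bsub>G\<^esub> (g B))))))
          ` {stab_orbit G act \<alpha> v | v. E \<alpha> v}
        = (\<lambda>B. \<Delta> (g B)) ` {stab_orbit G act \<alpha> v | v. E \<alpha> v}"
    using modular_function_eq_orbit_ratio assms(4) by (intro image_cong) simp_all
  have "\<Delta> ` carrier G = generate pos_real_group ((\<lambda>B. \<Delta> (g B)) ` {stab_orbit G act \<alpha> v | v. E \<alpha> v})"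
    by (rule modular_function_image_eq_generate) (use assms(4) in blast)
  moreover have "\<Delta> ` carrier G \<subseteq> \<rat> \<inter> {x. x > 0}"
    using modular_function_Rats modular.hom_closed by (auto simp: pos_real_group_def)
  ultimately show ?thesis
    unfolding generators by (rule conjI)
qed

end
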